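(* For $n\ge 2$ and $d\ge0$, the set of twisted $1$-forms $\omega\in H^0(\mathbb P^n,\Omega^1_{\mathbb P^n}(d+2))$ which admit a polynomial integrating factor is Zariski closed.
   Context: $H^0(\mathbb P^n,\Omega^1_{\mathbb P^n}(d+2))$ is identified with homogeneous polynomial $1$-forms $\sum_ia_idx_i$ on $\mathbb C^{n+1}$ with $a_i$ of degree $d+1$ and $\sum_ix_ia_i=0$ (no assumption on the codimension of the zero set). A polynomial integrating factor for $\omega$ is a non-zero $P\in H^0(\mathbb P^n,\mathcal O_{\mathbb P^n}(d+2))$ (homogeneous polynomial of degree $d+2$) such that $d(\omega/P)=0$. *)

theory Defs
  imports "HOL-Analysis.Analysis"
begin

text \<open>Homogeneous polynomials of degree k in the variables x_0,...,x_n are represented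
  by their coefficient functions on exponent vectors (monomials).\<close>

definition mons :: "nat \<Rightarrow> nat \<Rightarrow> (nat \<Rightarrow> nat) set" where
  "mons n k = {\<alpha>. (\<forall>i>n. \<alpha> i = 0) \<and> (\<Sum>i\<le>n. \<alpha> i) = k}"

definition hpoly_eval :: "nat \<Rightarrow> nat \<Rightarrow> ((nat \<Rightarrow> nat) \<Rightarrow> complex) \<Rightarrow> (nat \<Rightarrow> complex) \<Rightarrow> complex" where
  "hpoly_eval n k c x = (\<Sum>\<alpha>\<in>mons n k. c \<alpha> * (\<Prod>i\<le>n. x i ^ \<alpha> i))"

definition is_hcoeffs :: "nat \<Rightarrow> nat \<Rightarrow> ((nat \<Rightarrow> nat) \<Rightarrow> complex) \<Rightarrow> bool" where
  "is_hcoeffs n k c \<longleftrightarrow> (\<forall>\<alpha>. \<alpha> \<notin> mons n k \<longrightarrow> c \<alpha> = 0)"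

text \<open>A twisted 1-form omega = sum_i a_i dx_i in H^0(P^n, Omega^1(d+2)) is given by the
  coefficients w (i, alpha) of a_i (homogeneous of degree d+1), subject to sum_i x_i a_i = 0.\<close>

definition form_coeff :: "(nat \<times> (nat \<Rightarrow> nat) \<Rightarrow> complex) \<Rightarrow> nat \<Rightarrow> (nat \<Rightarrow> nat) \<Rightarrow> complex" where
  "form_coeff w i = (\<lambda>\<alpha>. w (i, \<alpha>))"

definition twisted_form :: "nat \<Rightarrow> nat \<Rightarrow> (nat \<times> (nat \<Rightarrow> nat) \<Rightarrow> complex) \<Rightarrow> bool" where
  "twisted_form n d w \<longleftrightarrow>
     (\<forall>i \<alpha>. (i > n \<or> \<alpha> \<notin> mons n (d+1)) \<longrightarrow> w (i, \<alpha>) = 0) \<and>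
     (\<forall>x. (\<Sum>i\<le>n. x i * hpoly_eval n (d+1) (form_coeff w i) x) = 0)"

definition pderiv_at :: "nat \<Rightarrow> ((nat \<Rightarrow> complex) \<Rightarrow> complex) \<Rightarrow> (nat \<Rightarrow> complex) \<Rightarrow> complex" where
  "pderiv_at j f x = deriv (\<lambda>t. f (x(j := t))) (x j)"

text \<open>P is a polynomial integrating factor: a nonzero homogeneous polynomial of degree d+2
  such that the rational 1-form omega/P is closed, i.e. d(omega/P) = 0 on the open set {P \<noteq> 0}.\<close>

definition integrating_factor :: "nat \<Rightarrow> nat \<Rightarrow> (nat \<times> (nat \<Rightarrow> nat) \<Rightarrow> complex) \<Rightarrow> ((nat \<Rightarrow> nat) \<Rightarrow> complex) \<Rightarrow> bool" where
  "integrating_factor n d w p \<longleftrightarrow>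
     is_hcoeffs n (d+2) p \<and> (\<exists>\<alpha>. p \<alpha> \<noteq> 0) \<and>
     (\<forall>x. hpoly_eval n (d+2) p x \<noteq> 0 \<longrightarrow>
        (\<forall>i\<le>n. \<forall>j\<le>n.
           pderiv_at j (\<lambda>y. hpoly_eval n (d+1) (form_coeff w i) y / hpoly_eval n (d+2) p y) x =
           pderiv_at i (\<lambda>y. hpoly_eval n (d+1) (form_coeff w j) y / hpoly_eval n (d+2) p y) x))"

text \<open>Zariski topology on the finite-dimensional space C^I (functions vanishing off the finite
  coordinate set I): polynomial functions in the coordinates, and their common zero sets.\<close>

definition polyfun_on :: "'v set \<Rightarrow> (('v \<Rightarrow> complex) \<Rightarrow> complex) \<Rightarrow> bool" where
  "polyfun_on I f \<longleftrightarrow> (\<exists>B coef. finite B \<and>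
      (\<forall>c. f c = (\<Sum>\<beta>\<in>B. coef \<beta> * (\<Prod>v\<in>I. c v ^ \<beta> v))))"

definition zariski_closed_in :: "'v set \<Rightarrow> ('v \<Rightarrow> complex) set \<Rightarrow> bool" where
  "zariski_closed_in I S \<longleftrightarrow> (\<exists>F. (\<forall>f\<in>F. polyfun_on I f) \<and>
      S = {c. (\<forall>v. v \<notin> I \<longrightarrow> c v = 0) \<and> (\<forall>f\<in>F. f c = 0)})"

end

theory Submission
  imports Defs "Jordan_Normal_Form.Determinant" "HOL-Library.Function_Algebras"
begin

text \<open>Clearing denominators, \<open>P\<close> is an integrating factor of \<open>\<omega> = \<Sum>\<^sub>i a\<^sub>i dx\<^sub>i\<close> iff
  \<open>P (\<partial>\<^sub>j a\<^sub>i - \<partial>\<^sub>i a\<^sub>j) = a\<^sub>i \<partial>\<^sub>j P - a\<^sub>j \<partial>\<^sub>i P\<close> holds on \<open>{P \<noteq> 0}\<close>, hence everywhere, as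
  \<open>{P \<noteq> 0}\<close> is dense. These identities are linear in the coefficients of \<open>P\<close>, with coefficients
  polynomial in those of \<open>\<omega>\<close>. So \<open>\<omega>\<close> admits an integrating factor iff a linear system with
  finitely many unknowns, depending polynomially on \<open>\<omega>\<close>, has a nonzero solution, i.e. iff all
  maximal minors of its coefficient matrix vanish.\<close>

section \<open>Polynomial functions on \<open>\<complex>\<^sup>I\<close>\<close>

lemma polyfun_onI:
  assumes "finite K" "\<And>c. f c = (\<Sum>k\<in>K. a k * (\<Prod>v\<in>I. c v ^ e k v))"
  shows "polyfun_on I f"
proof -
  define coef where "coef \<beta> = (\<Sum>k\<in>{k\<in>K. e k = \<beta>}. a k)" for \<beta>
  have "f c = (\<Sum>\<beta>\<in>e ` K. coef \<beta> * (\<Prod>v\<in>I. c v ^ \<beta> v))" for c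
  proof -
    have "(\<Sum>\<beta>\<in>e ` K. coef \<beta> * (\<Prod>v\<in>I. c v ^ \<beta> v))
        = (\<Sum>\<beta>\<in>e ` K. \<Sum>k\<in>{k\<in>K. e k = \<beta>}. a k * (\<Prod>v\<in>I. c v ^ e k v))"
      unfolding coef_def sum_distrib_right by (intro sum.cong refl) auto
    also have "\<dots> = (\<Sum>k\<in>K. a k * (\<Prod>v\<in>I. c v ^ e k v))"
      by (rule sum.group) (use assms(1) in auto)
    finally show ?thesis using assms(2) by simp
  qed
  then show ?thesis unfolding polyfun_on_def using assms(1) by blast
qed

lemma polyfun_on_const: "polyfun_on I (\<lambda>c. a)"
  by (rule polyfun_onI[where K="{()}" and a="\<lambda>_. a" and e="\<lambda>_ _. 0"]) auto

lemma polyfun_on_var: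
  assumes "finite I" "u \<in> I"
  shows "polyfun_on I (\<lambda>c. c u)"
proof (rule polyfun_onI[where K="{()}" and a="\<lambda>_. 1" and e="\<lambda>_ v. if v = u then 1 else 0"])
  fix c :: "'a \<Rightarrow> complex"
  have "(\<Prod>v\<in>I. c v ^ (if v = u then 1 else 0)) = (\<Prod>v\<in>I. if v = u then c v else 1)"
    by (intro prod.cong) auto
  then show "c u = (\<Sum>k\<in>{()}. 1 * (\<Prod>v\<in>I. c v ^ (if v = u then 1 else 0)))"
    using assms by simp
qed simp

lemma polyfun_on_add:
  assumes "polyfun_on I f" "polyfun_on I g"
  shows "polyfun_on I (\<lambda>c. f c + g c)"
proof -
  obtain B1 a1 where 1: "finite B1" "\<And>c. f c = (\<Sum>\<beta>\<in>B1. a1 \<beta> * (\<Prod>v\<in>I. c v ^ \<beta> v))"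
    using assms(1) unfolding polyfun_on_def by blast
  obtain B2 a2 where 2: "finite B2" "\<And>c. g c = (\<Sum>\<beta>\<in>B2. a2 \<beta> * (\<Prod>v\<in>I. c v ^ \<beta> v))"
    using assms(2) unfolding polyfun_on_def by blast
  show ?thesis
    by (rule polyfun_onI[where K="B1 <+> B2" and a="case_sum a1 a2" and e="case_sum id id"])
       (use 1 2 in \<open>auto simp: sum.Plus o_def\<close>)
qed

lemma polyfun_on_mult:
  assumes "polyfun_on I f" "polyfun_on I g"
  shows "polyfun_on I (\<lambda>c. f c * g c)"
proof -
  obtain B1 a1 where 1: "finite B1" "\<And>c. f c = (\<Sum>\<beta>\<in>B1. a1 \<beta> * (\<Prod>v\<in>I. c v ^ \<beta> v))"
    using assms(1) unfolding polyfun_on_def by blast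
  obtain B2 a2 where 2: "finite B2" "\<And>c. g c = (\<Sum>\<beta>\<in>B2. a2 \<beta> * (\<Prod>v\<in>I. c v ^ \<beta> v))"
    using assms(2) unfolding polyfun_on_def by blast
  show ?thesis
  proof (rule polyfun_onI[where K="B1 \<times> B2" and a="\<lambda>(\<beta>1, \<beta>2). a1 \<beta>1 * a2 \<beta>2"
        and e="\<lambda>(\<beta>1, \<beta>2) v. \<beta>1 v + \<beta>2 v"])
    fix c
    have "f c * g c = (\<Sum>(\<beta>1, \<beta>2)\<in>B1 \<times> B2.
        (a1 \<beta>1 * (\<Prod>v\<in>I. c v ^ \<beta>1 v)) * (a2 \<beta>2 * (\<Prod>v\<in>I. c v ^ \<beta>2 v)))"
      by (simp add: 1 2 sum_product sum.cartesian_product)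
    also have "\<dots> = (\<Sum>k\<in>B1 \<times> B2. (case k of (\<beta>1, \<beta>2) \<Rightarrow> a1 \<beta>1 * a2 \<beta>2) *
        (\<Prod>v\<in>I. c v ^ (case k of (\<beta>1, \<beta>2) \<Rightarrow> \<lambda>v. \<beta>1 v + \<beta>2 v) v))"
      by (intro sum.cong refl) (auto simp: power_add prod.distrib mult_ac)
    finally show "f c * g c = \<dots>" .
  qed (use 1 2 in auto)
qed

lemma polyfun_on_diff:
  assumes "polyfun_on I f" "polyfun_on I g"
  shows "polyfun_on I (\<lambda>c. f c - g c)"
  using polyfun_on_add[OF assms(1) polyfun_on_mult[OF polyfun_on_const[of I "-1"] assms(2)]]
  by simp

lemma polyfun_on_power: "polyfun_on I f \<Longrightarrow> polyfun_on I (\<lambda>c. f c ^ m)"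
  by (induction m) (auto intro: polyfun_on_mult polyfun_on_const)

lemma polyfun_on_sum:
  "finite S \<Longrightarrow> (\<And>s. s \<in> S \<Longrightarrow> polyfun_on I (f s)) \<Longrightarrow> polyfun_on I (\<lambda>c. \<Sum>s\<in>S. f s c)"
  by (induction S rule: finite_induct) (auto intro: polyfun_on_add polyfun_on_const)

lemma polyfun_on_prod:
  "finite S \<Longrightarrow> (\<And>s. s \<in> S \<Longrightarrow> polyfun_on I (f s)) \<Longrightarrow> polyfun_on I (\<lambda>c. \<Prod>s\<in>S. f s c)"
  by (induction S rule: finite_induct) (auto intro: polyfun_on_mult polyfun_on_const)

lemma polyfun_on_det:
  assumes "\<And>k l. k < N \<Longrightarrow> l < N \<Longrightarrow> polyfun_on I (\<lambda>c. A c k l)"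
  shows "polyfun_on I (\<lambda>c. Determinant.det (Matrix.mat N N (\<lambda>(k, l). A c k l)))"
proof -
  have "polyfun_on I (\<lambda>c. \<Sum>p\<in>{p. p permutes {0..<N}}. of_int (sign p) * (\<Prod>i\<in>{0..<N}. A c i (p i)))"
    by (intro polyfun_on_sum polyfun_on_mult polyfun_on_const polyfun_on_prod assms)
       (auto simp: finite_permutations permutes_in_image)
  then show ?thesis by (simp add: Determinant.det_def)
qed

lemma polyfun_on_restrict_line:
  assumes "polyfun_on I f"
  shows "\<exists>q. \<forall>t. f (\<lambda>v. a v + t * b v) = poly q t"
proof -
  obtain B coef where "\<And>c. f c = (\<Sum>\<beta>\<in>B. coef \<beta> * (\<Prod>v\<in>I. c v ^ \<beta> v))"
    using assms unfolding polyfun_on_def by blast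
  then have "f (\<lambda>v. a v + t * b v) =
      poly (\<Sum>\<beta>\<in>B. Polynomial.smult (coef \<beta>) (\<Prod>v\<in>I. [:a v, b v:] ^ \<beta> v)) t" for t
    by (simp add: poly_sum poly_prod mult.commute)
  then show ?thesis by blast
qed

text \<open>Restricting to the line through \<open>c0\<close> and \<open>c\<close> reduces this to the fact that
  \<open>\<complex>[t]\<close> has no zero divisors.\<close>

lemma polyfun_on_eq_0_if_mult_eq_0:
  assumes "polyfun_on I f" "polyfun_on I g" "\<And>c. f c * g c = 0" "g c0 \<noteq> 0"
  shows "f c = 0"
proof -
  let ?line = "\<lambda>t v. c0 v + t * (c v - c0 v)"
  obtain q where q: "\<And>t. f (?line t) = poly q t"
    using polyfun_on_restrict_line[OF assms(1), of c0 "\<lambda>v. c v - c0 v"] by blast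
  obtain r where r: "\<And>t. g (?line t) = poly r t"
    using polyfun_on_restrict_line[OF assms(2), of c0 "\<lambda>v. c v - c0 v"] by blast
  have "poly (q * r) t = 0" for t
    using assms(3) by (simp flip: q r)
  then have "q * r = 0"
    using poly_all_0_iff_0 by blast
  moreover have "r \<noteq> 0"
    using r[of 0] assms(4) by (auto simp: fun_eq_iff)
  ultimately have "poly q 1 = 0" by simp
  then show ?thesis using q[of 1] by simp
qed

section \<open>Nonzero kernels and maximal minors\<close>

interpretation coord_fun: vector_space "\<lambda>(a::complex) (f::nat \<Rightarrow> complex) i. a * f i"
  by unfold_locales (auto simp: fun_eq_iff algebra_simps)

lemma minor_vanishes_if_nonzero_kernel:
  fixes r :: "'t \<Rightarrow> nat \<Rightarrow> complex"
  assumes "l0 < N" "P l0 \<noteq> 0" "\<And>t. (\<Sum>l<N. r t l * P l) = 0"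
  shows "Determinant.det (Matrix.mat N N (\<lambda>(k, l). r (\<tau> k) l)) = 0"
proof -
  let ?A = "Matrix.mat N N (\<lambda>(k, l). r (\<tau> k) l)"
  let ?v = "Matrix.vec N P"
  have "?v \<noteq> 0\<^sub>v N"
    using assms(1,2) by (metis index_vec index_zero_vec(1))
  moreover have "?A *\<^sub>v ?v = 0\<^sub>v N"
    using assms(3) by (intro eq_vecI) (simp_all add: scalar_prod_def atLeast0LessThan)
  moreover have "?v \<in> carrier_vec N" "?A \<in> carrier_mat N N" by simp_all
  ultimately show ?thesis
    using det_0_iff_vec_prod_zero[of ?A N] by blast
qed

text \<open>The padded rows span a space of dimension at most \<open>N\<close>, so a basis of it consists of
  at most \<open>N\<close> rows; a nonzero vector killing these rows (the minor formed by them vanishes)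
  kills all of them.\<close>

lemma nonzero_kernel_if_minors_vanish:
  fixes r :: "'t \<Rightarrow> nat \<Rightarrow> complex"
  assumes minors: "\<And>\<tau>. Determinant.det (Matrix.mat N N (\<lambda>(k, l). r (\<tau> k) l)) = 0"
  shows "\<exists>P. (\<exists>l<N. P l \<noteq> 0) \<and> (\<forall>t. (\<Sum>l<N. r t l * P l) = 0)"
proof -
  define row where "row t = (\<lambda>l. if l < N then r t l else 0)" for t
  obtain B where B: "B \<subseteq> range row" "coord_fun.independent B" "range row \<subseteq> coord_fun.span B"
    using coord_fun.maximal_independent_subset by blast
  define E where "E = (\<lambda>l i. if i = l then 1 else 0 :: complex) ` {..<N}"
  have sum_apply: "(\<Sum>l<L. f l) i = (\<Sum>l<L. f l i)" for L and f :: "nat \<Rightarrow> nat \<Rightarrow> complex" and i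
    by (induction L) auto
  have "row t = (\<Sum>l<N. (\<lambda>i. r t l * (if i = l then 1 else 0)))" for t
    by (auto simp: fun_eq_iff row_def sum_apply if_distrib cong: if_cong)
  moreover have "(\<Sum>l<N. (\<lambda>i. r t l * (if i = l then 1 else 0))) \<in> coord_fun.span E" for t
    unfolding E_def
    by (intro coord_fun.span_sum coord_fun.span_scale coord_fun.span_base) auto
  ultimately have "range row \<subseteq> coord_fun.span E"
    by auto
  then have "finite B" "card B \<le> card E"
    using coord_fun.independent_span_bound[of E B] B by (auto simp: E_def)
  moreover have "card E \<le> N"
    unfolding E_def using card_image_le[of "{..<N}"] by simp
  ultimately have "card B \<le> N" by simp
  obtain U where U: "inj_on row U" "B = row ` U"
    using B(1) subset_image_inj by metis
  then have "finite U" "card U = card B"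
    using \<open>finite B\<close> by (auto simp: card_image)
  then obtain \<tau> where \<tau>: "bij_betw \<tau> {0..<card B} U"
    using ex_bij_betw_nat_finite by metis
  obtain v where v: "v \<in> carrier_vec N" "v \<noteq> 0\<^sub>v N"
    "Matrix.mat N N (\<lambda>(k, l). r (\<tau> k) l) *\<^sub>v v = 0\<^sub>v N"
    using minors[of \<tau>] det_0_iff_vec_prod_zero[of "Matrix.mat N N (\<lambda>(k, l). r (\<tau> k) l)" N] by auto
  define \<phi> where "\<phi> f = (\<Sum>l<N. f l * vec_index v l)" for f :: "nat \<Rightarrow> complex"
  have "coord_fun.subspace {f. \<phi> f = 0}"
    unfolding coord_fun.subspace_def \<phi>_def
    by (auto simp: sum.distrib distrib_right sum_distrib_left[symmetric] mult.assoc)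
  moreover have "B \<subseteq> {f. \<phi> f = 0}"
  proof
    fix b assume "b \<in> B"
    then obtain u where "u \<in> U" "b = row u"
      using U(2) by blast
    then obtain k where k: "k < card B" "b = row (\<tau> k)"
      using \<tau> by (metis atLeastLessThan_iff bij_betw_def imageE)
    have "\<phi> b = vec_index (Matrix.mat N N (\<lambda>(k, l). r (\<tau> k) l) *\<^sub>v v) k"
      using k \<open>card B \<le> N\<close> v(1) by (simp add: \<phi>_def row_def scalar_prod_def atLeast0LessThan)
    then show "b \<in> {f. \<phi> f = 0}"
      using v(3) k \<open>card B \<le> N\<close> by simp
  qed
  ultimately have "\<phi> (row t) = 0" for t
    using B(3) coord_fun.span_minimal by blast
  moreover obtain l where "l < N" "vec_index v l \<noteq> 0"
    using v(1,2) by (metis carrier_vecD eq_vecI index_zero_vec)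
  ultimately show ?thesis
    by (intro exI[of _ "\<lambda>l. vec_index v l"]) (auto simp: \<phi>_def row_def)
qed

lemma zariski_closed_in_Int:
  assumes "zariski_closed_in I S" "zariski_closed_in I T"
  shows "zariski_closed_in I (S \<inter> T)"
proof -
  obtain F where F: "\<forall>f\<in>F. polyfun_on I f"
    "S = {c. (\<forall>v. v \<notin> I \<longrightarrow> c v = 0) \<and> (\<forall>f\<in>F. f c = 0)}"
    using assms(1) unfolding zariski_closed_in_def by blast
  obtain G where G: "\<forall>f\<in>G. polyfun_on I f"
    "T = {c. (\<forall>v. v \<notin> I \<longrightarrow> c v = 0) \<and> (\<forall>f\<in>G. f c = 0)}"
    using assms(2) unfolding zariski_closed_in_def by blast
  show ?thesis
    unfolding zariski_closed_in_def using F G by (intro exI[of _ "F \<union> G"]) auto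
qed

text \<open>The set is cut out by the maximal minors of the coefficient matrix, with the rows
  outside \<open>T\<close> replaced by zero.\<close>

lemma zariski_closed_in_nonzero_kernel:
  fixes A :: "('v \<Rightarrow> complex) \<Rightarrow> 't \<Rightarrow> 'b \<Rightarrow> complex"
  assumes M: "finite M" and poly: "\<And>t \<beta>. t \<in> T \<Longrightarrow> \<beta> \<in> M \<Longrightarrow> polyfun_on I (\<lambda>c. A c t \<beta>)"
  shows "zariski_closed_in I {c. (\<forall>v. v \<notin> I \<longrightarrow> c v = 0) \<and>
           (\<exists>p. (\<exists>\<beta>\<in>M. p \<beta> \<noteq> 0) \<and> (\<forall>t\<in>T. (\<Sum>\<beta>\<in>M. A c t \<beta> * p \<beta>) = 0))}"
proof -
  define N where "N = card M"
  obtain h where h: "bij_betw h {0..<N} M"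
    using ex_bij_betw_nat_finite[OF M] unfolding N_def by blast
  define r where "r c t l = (if t \<in> T then A c t (h l) else 0)" for c t l
  have reindex: "(\<Sum>\<beta>\<in>M. g \<beta>) = (\<Sum>l<N. g (h l))" for g :: "'b \<Rightarrow> complex"
    using sum.reindex_bij_betw[OF h, of g] by (simp add: atLeast0LessThan)
  have r_sum: "(\<Sum>l<N. r c t l * P l) = (if t \<in> T then (\<Sum>l<N. A c t (h l) * P l) else 0)" for c t P
    by (simp add: r_def)
  have kernel_iff: "(\<exists>p. (\<exists>\<beta>\<in>M. p \<beta> \<noteq> 0) \<and> (\<forall>t\<in>T. (\<Sum>\<beta>\<in>M. A c t \<beta> * p \<beta>) = 0)) \<longleftrightarrow>
      (\<exists>P. (\<exists>l<N. P l \<noteq> 0) \<and> (\<forall>t. (\<Sum>l<N. r c t l * P l) = 0))" for c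
  proof
    assume "\<exists>p. (\<exists>\<beta>\<in>M. p \<beta> \<noteq> 0) \<and> (\<forall>t\<in>T. (\<Sum>\<beta>\<in>M. A c t \<beta> * p \<beta>) = 0)"
    then obtain p \<beta> where "\<beta> \<in> M" "p \<beta> \<noteq> 0" "\<forall>t\<in>T. (\<Sum>l<N. A c t (h l) * p (h l)) = 0"
      unfolding reindex by blast
    moreover obtain l where "l < N" "h l = \<beta>"
      using h \<open>\<beta> \<in> M\<close> by (auto simp: bij_betw_def)
    ultimately show "\<exists>P. (\<exists>l<N. P l \<noteq> 0) \<and> (\<forall>t. (\<Sum>l<N. r c t l * P l) = 0)"
      by (intro exI[of _ "p \<circ> h"]) (auto simp: r_sum)
  next
    assume "\<exists>P. (\<exists>l<N. P l \<noteq> 0) \<and> (\<forall>t. (\<Sum>l<N. r c t l * P l) = 0)"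
    then obtain P l where P: "l < N" "P l \<noteq> 0" "\<And>t. (\<Sum>l<N. r c t l * P l) = 0"
      by blast
    define p where "p = P \<circ> inv_into {0..<N} h"
    have ph: "p (h l) = P l" if "l < N" for l
      using h that by (simp add: p_def bij_betw_inv_into_left)
    show "\<exists>p. (\<exists>\<beta>\<in>M. p \<beta> \<noteq> 0) \<and> (\<forall>t\<in>T. (\<Sum>\<beta>\<in>M. A c t \<beta> * p \<beta>) = 0)"
    proof (intro exI conjI ballI)
      show "\<exists>\<beta>\<in>M. p \<beta> \<noteq> 0"
        using P(1,2) ph h by (metis atLeast0LessThan bij_betwE lessThan_iff)
      fix t assume "t \<in> T"
      then show "(\<Sum>\<beta>\<in>M. A c t \<beta> * p \<beta>) = 0"
        using P(3)[of t] by (simp add: reindex ph r_sum)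
    qed
  qed
  define F where "F = range (\<lambda>\<tau> c. Determinant.det (Matrix.mat N N (\<lambda>(k, l). r c (\<tau> k) l)))"
  have "polyfun_on I (\<lambda>c. r c t l)" if "l < N" for t l
  proof (cases "t \<in> T")
    case True
    then show ?thesis
      using that h by (simp add: r_def poly bij_betwE)
  qed (simp add: r_def polyfun_on_const)
  then have "\<forall>f\<in>F. polyfun_on I f"
    unfolding F_def by (auto intro: polyfun_on_det)
  moreover have "(\<forall>f\<in>F. f c = 0) \<longleftrightarrow> (\<exists>P. (\<exists>l<N. P l \<noteq> 0) \<and> (\<forall>t. (\<Sum>l<N. r c t l * P l) = 0))"
    for c
  proof
    assume "\<forall>f\<in>F. f c = 0"
    then show "\<exists>P. (\<exists>l<N. P l \<noteq> 0) \<and> (\<forall>t. (\<Sum>l<N. r c t l * P l) = 0)"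
      by (intro nonzero_kernel_if_minors_vanish) (simp add: F_def)
  next
    assume "\<exists>P. (\<exists>l<N. P l \<noteq> 0) \<and> (\<forall>t. (\<Sum>l<N. r c t l * P l) = 0)"
    then show "\<forall>f\<in>F. f c = 0"
      unfolding F_def using minor_vanishes_if_nonzero_kernel by blast
  qed
  ultimately show ?thesis
    unfolding zariski_closed_in_def kernel_iff by (intro exI[of _ F] conjI) auto
qed

section \<open>Homogeneous polynomials\<close>

definition mon_eval :: "nat \<Rightarrow> (nat \<Rightarrow> nat) \<Rightarrow> (nat \<Rightarrow> complex) \<Rightarrow> complex" where
  "mon_eval n \<alpha> x = (\<Prod>i\<le>n. x i ^ \<alpha> i)"

lemma hpoly_eval_eq_sum_mon_eval: "hpoly_eval n k c x = (\<Sum>\<alpha>\<in>mons n k. c \<alpha> * mon_eval n \<alpha> x)"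
  unfolding hpoly_eval_def mon_eval_def ..

lemma mons_le: "\<alpha> \<in> mons n k \<Longrightarrow> \<alpha> i \<le> k"
  by (cases "i \<le> n") (auto simp: mons_def intro: order.trans[OF member_le_sum])

lemma finite_mons: "finite (mons n k)"
proof (rule finite_subset)
  show "mons n k \<subseteq> {\<alpha>. \<forall>i. (i \<in> {..n} \<longrightarrow> \<alpha> i \<in> {..k}) \<and> (i \<notin> {..n} \<longrightarrow> \<alpha> i = 0)}"
    by (auto simp: mons_le) (auto simp: mons_def)
  show "finite {\<alpha>. \<forall>i. (i \<in> {..n} \<longrightarrow> \<alpha> i \<in> {..k}) \<and> (i \<notin> {..n} \<longrightarrow> \<alpha> i = (0::nat))}"
    by (rule finite_set_of_finite_funs) auto
qed

lemma base_expansion_less: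
  fixes K :: nat
  assumes "\<forall>i<m. a i < K"
  shows "(\<Sum>i<m. a i * K ^ i) < K ^ m"
  using assms
proof (induction m)
  case (Suc m)
  then have "(\<Sum>i<Suc m. a i * K ^ i) < K ^ m + a m * K ^ m"
    by simp
  also have "\<dots> = (a m + 1) * K ^ m"
    by simp
  also have "\<dots> \<le> K * K ^ m"
    by (rule mult_right_mono) (use Suc.prems in auto)
  finally show ?case by simp
qed simp

lemma base_expansion_inj:
  fixes K :: nat
  assumes "\<forall>i<m. a i < K" "\<forall>i<m. b i < K" "(\<Sum>i<m. a i * K ^ i) = (\<Sum>i<m. b i * K ^ i)"
  shows "\<forall>i<m. a i = b i"
  using assms
proof (induction m)
  case (Suc m)
  define A where "A = (\<Sum>i<m. a i * K ^ i)"
  define B where "B = (\<Sum>i<m. b i * K ^ i)"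
  have "A < K ^ m" "B < K ^ m"
    unfolding A_def B_def using Suc.prems by (auto intro!: base_expansion_less)
  moreover from this have "K ^ m \<noteq> 0"
    by linarith
  ultimately have "a m = (A + a m * K ^ m) div K ^ m" "b m = (B + b m * K ^ m) div K ^ m"
    by simp_all
  moreover have eq: "A + a m * K ^ m = B + b m * K ^ m"
    using Suc.prems(3) by (simp add: A_def B_def)
  ultimately have "a m = b m"
    by simp
  with eq have "A = B" by simp
  moreover have "\<forall>i<m. a i < K" "\<forall>i<m. b i < K"
    using Suc.prems(1,2) by simp_all
  ultimately have "\<forall>i<m. a i = b i"
    unfolding A_def B_def using Suc.IH by blast
  with \<open>a m = b m\<close> show ?case
    by (simp add: less_Suc_eq)
qed simp

text \<open>Kronecker substitution: for \<open>K = k + 1\<close>, putting \<open>x\<^sub>i = z ^ K ^ i\<close> sends the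
  distinct monomials of degree \<open>k\<close> to distinct powers of \<open>z\<close>.\<close>

lemma hpoly_eval_eq_0_imp_coeff_eq_0:
  assumes "\<And>x. hpoly_eval n k c x = 0" "\<beta> \<in> mons n k"
  shows "c \<beta> = 0"
proof -
  define K where "K = k + 1"
  define enc where "enc \<alpha> = (\<Sum>i<Suc n. \<alpha> i * K ^ i)" for \<alpha> :: "nat \<Rightarrow> nat"
  have enc_inj: "enc \<alpha> = enc \<beta> \<longleftrightarrow> \<alpha> = \<beta>" if "\<alpha> \<in> mons n k" for \<alpha>
  proof
    assume "enc \<alpha> = enc \<beta>"
    moreover have "\<forall>i<Suc n. \<alpha> i < K" "\<forall>i<Suc n. \<beta> i < K"
      using mons_le[OF that] mons_le[OF assms(2)] by (auto simp: K_def less_Suc_eq_le)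
    ultimately have "\<forall>i<Suc n. \<alpha> i = \<beta> i"
      unfolding enc_def by (intro base_expansion_inj)
    then show "\<alpha> = \<beta>"
      using that assms(2) by (auto simp: fun_eq_iff mons_def less_Suc_eq_le) (metis leI)
  qed simp
  define q where "q = (\<Sum>\<alpha>\<in>mons n k. monom (c \<alpha>) (enc \<alpha>))"
  have "mon_eval n \<alpha> (\<lambda>i. z ^ K ^ i) = z ^ enc \<alpha>" for \<alpha> z
    unfolding mon_eval_def enc_def power_sum lessThan_Suc_atMost
    by (intro prod.cong refl) (metis power_mult mult.commute)
  then have "poly q z = hpoly_eval n k c (\<lambda>i. z ^ K ^ i)" for z
    unfolding q_def hpoly_eval_eq_sum_mon_eval poly_sum by (simp add: poly_monom)
  then have "q = 0"
    using assms(1) poly_all_0_iff_0 by metis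
  then have "0 = coeff q (enc \<beta>)" by simp
  also have "\<dots> = (\<Sum>\<alpha>\<in>mons n k. if \<alpha> = \<beta> then c \<alpha> else 0)"
    unfolding q_def coeff_sum coeff_monom by (intro sum.cong refl) (simp add: enc_inj)
  also have "\<dots> = c \<beta>"
    using assms(2) by (simp add: finite_mons)
  finally show ?thesis by simp
qed

definition mon_pderiv :: "nat \<Rightarrow> (nat \<Rightarrow> nat) \<Rightarrow> nat \<Rightarrow> (nat \<Rightarrow> complex) \<Rightarrow> complex" where
  "mon_pderiv n \<alpha> j x = of_nat (\<alpha> j) * x j ^ (\<alpha> j - 1) * (\<Prod>i\<in>{..n} - {j}. x i ^ \<alpha> i)"

definition hpoly_pderiv ::
    "nat \<Rightarrow> nat \<Rightarrow> ((nat \<Rightarrow> nat) \<Rightarrow> complex) \<Rightarrow> nat \<Rightarrow> (nat \<Rightarrow> complex) \<Rightarrow> complex" where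
  "hpoly_pderiv n k c j x = (\<Sum>\<alpha>\<in>mons n k. c \<alpha> * mon_pderiv n \<alpha> j x)"

lemma mon_eval_has_pderiv:
  assumes "j \<le> n"
  shows "((\<lambda>t. mon_eval n \<alpha> (x(j := t))) has_field_derivative mon_pderiv n \<alpha> j x) (at (x j))"
proof -
  have "mon_eval n \<alpha> (x(j := t)) = t ^ \<alpha> j * (\<Prod>i\<in>{..n} - {j}. x i ^ \<alpha> i)" for t
    unfolding mon_eval_def using assms by (subst prod.remove[of _ j]) auto
  moreover have "((\<lambda>t. t ^ \<alpha> j * (\<Prod>i\<in>{..n} - {j}. x i ^ \<alpha> i)) has_field_derivative
      of_nat (\<alpha> j) * (1 * x j ^ (\<alpha> j - Suc 0)) * (\<Prod>i\<in>{..n} - {j}. x i ^ \<alpha> i)) (at (x j))"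
    by (intro DERIV_cmult_right DERIV_power DERIV_ident)
  ultimately show ?thesis
    by (simp add: mon_pderiv_def)
qed

lemma hpoly_eval_has_pderiv:
  assumes "j \<le> n"
  shows "((\<lambda>t. hpoly_eval n k c (x(j := t))) has_field_derivative hpoly_pderiv n k c j x) (at (x j))"
  unfolding hpoly_eval_eq_sum_mon_eval hpoly_pderiv_def
  by (intro DERIV_sum DERIV_cmult mon_eval_has_pderiv assms)

definition quotient_pderiv_numer :: "nat \<Rightarrow> nat \<Rightarrow> ((nat \<Rightarrow> nat) \<Rightarrow> complex) \<Rightarrow> nat \<Rightarrow>
    ((nat \<Rightarrow> nat) \<Rightarrow> complex) \<Rightarrow> nat \<Rightarrow> (nat \<Rightarrow> complex) \<Rightarrow> complex" where
  "quotient_pderiv_numer n k c l p j x =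
     hpoly_pderiv n k c j x * hpoly_eval n l p x - hpoly_eval n k c x * hpoly_pderiv n l p j x"

lemma pderiv_at_hpoly_quotient:
  assumes "j \<le> n" "hpoly_eval n l p x \<noteq> 0"
  shows "pderiv_at j (\<lambda>y. hpoly_eval n k c y / hpoly_eval n l p y) x =
    quotient_pderiv_numer n k c l p j x / (hpoly_eval n l p x)\<^sup>2"
proof -
  have "((\<lambda>t. hpoly_eval n k c (x(j := t)) / hpoly_eval n l p (x(j := t))) has_field_derivative
      (hpoly_pderiv n k c j x * hpoly_eval n l p (x(j := x j)) -
        hpoly_eval n k c (x(j := x j)) * hpoly_pderiv n l p j x) /
      (hpoly_eval n l p (x(j := x j)) * hpoly_eval n l p (x(j := x j)))) (at (x j))"
    by (rule DERIV_divide) (use hpoly_eval_has_pderiv[OF assms(1)] assms(2) in auto)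
  then show ?thesis
    unfolding pderiv_at_def
    by (simp add: DERIV_imp_deriv quotient_pderiv_numer_def power2_eq_square)
qed

section \<open>Integrating factors\<close>

definition closedness_defect :: "nat \<Rightarrow> nat \<Rightarrow> (nat \<times> (nat \<Rightarrow> nat) \<Rightarrow> complex) \<Rightarrow>
    ((nat \<Rightarrow> nat) \<Rightarrow> complex) \<Rightarrow> nat \<Rightarrow> nat \<Rightarrow> (nat \<Rightarrow> complex) \<Rightarrow> complex" where
  "closedness_defect n d w p i j x =
     quotient_pderiv_numer n (d+1) (form_coeff w i) (d+2) p j x -
     quotient_pderiv_numer n (d+1) (form_coeff w j) (d+2) p i x"

lemma polyfun_on_hpoly_eval: "polyfun_on {..n} (hpoly_eval n k c)"
  unfolding polyfun_on_def hpoly_eval_def using finite_mons by blast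

lemma polyfun_on_hpoly_pderiv:
  assumes "j \<le> n"
  shows "polyfun_on {..n} (hpoly_pderiv n k c j)"
  unfolding hpoly_pderiv_def mon_pderiv_def using assms
  by (intro polyfun_on_sum polyfun_on_mult polyfun_on_const polyfun_on_prod polyfun_on_power
      polyfun_on_var finite_mons) auto

lemma polyfun_on_closedness_defect:
  assumes "i \<le> n" "j \<le> n"
  shows "polyfun_on {..n} (closedness_defect n d w p i j)"
  unfolding closedness_defect_def quotient_pderiv_numer_def
  by (intro polyfun_on_diff polyfun_on_mult polyfun_on_hpoly_eval polyfun_on_hpoly_pderiv assms)

lemma integrating_factor_iff_closedness_defect:
  "integrating_factor n d w p \<longleftrightarrow> is_hcoeffs n (d+2) p \<and> (\<exists>\<alpha>. p \<alpha> \<noteq> 0) \<and>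
     (\<forall>x. \<forall>i\<le>n. \<forall>j\<le>n. closedness_defect n d w p i j x = 0)"
proof -
  let ?P = "hpoly_eval n (d+2) p"
  let ?a = "\<lambda>i. hpoly_eval n (d+1) (form_coeff w i)"
  have local: "pderiv_at j (\<lambda>y. ?a i y / ?P y) x = pderiv_at i (\<lambda>y. ?a j y / ?P y) x \<longleftrightarrow>
      closedness_defect n d w p i j x = 0" if "?P x \<noteq> 0" "i \<le> n" "j \<le> n" for x i j
    using that by (simp add: pderiv_at_hpoly_quotient closedness_defect_def)
  have global: "closedness_defect n d w p i j x = 0"
    if hc: "is_hcoeffs n (d+2) p" and nz: "p \<alpha> \<noteq> 0" and ij: "i \<le> n" "j \<le> n"
      and on_P: "\<forall>y. ?P y \<noteq> 0 \<longrightarrow> closedness_defect n d w p i j y = 0" for \<alpha> i j x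
  proof -
    obtain x0 where "?P x0 \<noteq> 0"
      using hpoly_eval_eq_0_imp_coeff_eq_0[of n "d+2" p \<alpha>] hc nz
      unfolding is_hcoeffs_def by blast
    moreover have "closedness_defect n d w p i j y * ?P y = 0" for y
      using on_P by (cases "?P y = 0") auto
    ultimately show ?thesis
      using polyfun_on_eq_0_if_mult_eq_0[OF polyfun_on_closedness_defect polyfun_on_hpoly_eval]
        ij by blast
  qed
  show ?thesis
    unfolding integrating_factor_def using local global by (smt (verit))
qed

lemma sum_mons_indicator:
  fixes p f :: "(nat \<Rightarrow> nat) \<Rightarrow> complex"
  shows "(\<Sum>\<alpha>\<in>mons n k. p \<alpha> * f \<alpha>) =
   (\<Sum>\<beta>\<in>mons n k. p \<beta> * (\<Sum>\<alpha>\<in>mons n k. indicator {\<beta>} \<alpha> * f \<alpha>))"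
proof (intro sum.cong refl)
  fix \<beta> assume "\<beta> \<in> mons n k"
  have "(\<Sum>\<alpha>\<in>mons n k. indicator {\<beta>} \<alpha> * f \<alpha>) = (\<Sum>\<alpha>\<in>mons n k. if \<alpha> = \<beta> then f \<alpha> else 0)"
    by (intro sum.cong) (auto simp: indicator_def)
  with \<open>\<beta> \<in> mons n k\<close> show "p \<beta> * f \<beta> = p \<beta> * (\<Sum>\<alpha>\<in>mons n k. indicator {\<beta>} \<alpha> * f \<alpha>)"
    by (simp add: finite_mons)
qed

lemma closedness_defect_linear:
  "closedness_defect n d w p i j x =
     (\<Sum>\<beta>\<in>mons n (d+2). closedness_defect n d w (indicator {\<beta>}) i j x * p \<beta>)"
proof -
  have "quotient_pderiv_numer n k c l p j x =
      (\<Sum>\<beta>\<in>mons n l. quotient_pderiv_numer n k c l (indicator {\<beta>}) j x * p \<beta>)" for k c l j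
    unfolding quotient_pderiv_numer_def hpoly_eval_eq_sum_mon_eval hpoly_pderiv_def
    by (subst (1 2) sum_mons_indicator)
       (simp add: sum_distrib_left sum_subtractf algebra_simps)
  then show ?thesis
    unfolding closedness_defect_def by (simp add: sum_subtractf left_diff_distrib)
qed

lemma polyfun_on_hpoly_eval_in_coeffs:
  assumes "\<And>\<alpha>. \<alpha> \<in> mons n k \<Longrightarrow> polyfun_on I (\<lambda>w. c w \<alpha>)"
  shows "polyfun_on I (\<lambda>w. hpoly_eval n k (c w) x)"
  unfolding hpoly_eval_def
  by (intro polyfun_on_sum polyfun_on_mult polyfun_on_const assms finite_mons)

lemma polyfun_on_hpoly_pderiv_in_coeffs:
  assumes "\<And>\<alpha>. \<alpha> \<in> mons n k \<Longrightarrow> polyfun_on I (\<lambda>w. c w \<alpha>)"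
  shows "polyfun_on I (\<lambda>w. hpoly_pderiv n k (c w) j x)"
  unfolding hpoly_pderiv_def
  by (intro polyfun_on_sum polyfun_on_mult polyfun_on_const assms finite_mons)

lemma polyfun_on_form_coeff:
  assumes "i \<le> n" "\<alpha> \<in> mons n (d+1)"
  shows "polyfun_on ({..n} \<times> mons n (d+1)) (\<lambda>w. form_coeff w i \<alpha>)"
  unfolding form_coeff_def using assms by (intro polyfun_on_var) (auto simp: finite_mons)

lemma polyfun_on_closedness_defect_in_form:
  assumes "i \<le> n" "j \<le> n"
  shows "polyfun_on ({..n} \<times> mons n (d+1)) (\<lambda>w. closedness_defect n d w p i j x)"
  unfolding closedness_defect_def quotient_pderiv_numer_def
  by (intro polyfun_on_diff polyfun_on_mult polyfun_on_const polyfun_on_hpoly_eval_in_coeffs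
      polyfun_on_hpoly_pderiv_in_coeffs polyfun_on_form_coeff assms)

lemma zariski_closed_twisted_forms:
  "zariski_closed_in ({..n} \<times> mons n (d+1)) {w. twisted_form n d w}"
proof -
  define F where "F = range (\<lambda>x w. \<Sum>i\<le>n. x i * hpoly_eval n (d+1) (form_coeff w i) x)"
  have "polyfun_on ({..n} \<times> mons n (d+1)) (\<lambda>w. \<Sum>i\<le>n. x i * hpoly_eval n (d+1) (form_coeff w i) x)"
    for x
    by (intro polyfun_on_sum polyfun_on_mult polyfun_on_const polyfun_on_hpoly_eval_in_coeffs
        polyfun_on_form_coeff) auto
  then have "\<forall>f\<in>F. polyfun_on ({..n} \<times> mons n (d+1)) f"
    unfolding F_def by blast
  moreover have "{w. twisted_form n d w} =
      {w. (\<forall>v. v \<notin> {..n} \<times> mons n (d+1) \<longrightarrow> w v = 0) \<and> (\<forall>f\<in>F. f w = 0)}"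
    unfolding twisted_form_def F_def by auto
  ultimately show ?thesis
    unfolding zariski_closed_in_def by blast
qed

text \<open>Column \<open>\<beta>\<close> holds the closedness defects of the monomial \<open>x\<^sup>\<beta>\<close>; by linearity, the
  matrix applied to the coefficients of \<open>P\<close> gives the defects of \<open>P\<close>.\<close>

definition defect_matrix :: "nat \<Rightarrow> nat \<Rightarrow> (nat \<times> (nat \<Rightarrow> nat) \<Rightarrow> complex) \<Rightarrow>
    (nat \<Rightarrow> complex) \<times> nat \<times> nat \<Rightarrow> (nat \<Rightarrow> nat) \<Rightarrow> complex" where
  "defect_matrix n d w = (\<lambda>(x, i, j) \<beta>. closedness_defect n d w (indicator {\<beta>}) i j x)"

lemma ex_integrating_factor_iff_nonzero_kernel:
  "(\<exists>p. integrating_factor n d w p) \<longleftrightarrow>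
   (\<exists>p. (\<exists>\<beta>\<in>mons n (d+2). p \<beta> \<noteq> 0) \<and>
      (\<forall>t\<in>UNIV \<times> {..n} \<times> {..n}. (\<Sum>\<beta>\<in>mons n (d+2). defect_matrix n d w t \<beta> * p \<beta>) = 0))"
  (is "?lhs \<longleftrightarrow> (\<exists>p. ?kernel p)")
proof
  assume ?lhs
  then obtain p where p: "integrating_factor n d w p" ..
  then have "\<exists>\<beta>\<in>mons n (d+2). p \<beta> \<noteq> 0"
    unfolding integrating_factor_iff_closedness_defect is_hcoeffs_def by blast
  moreover have "(\<Sum>\<beta>\<in>mons n (d+2). closedness_defect n d w (indicator {\<beta>}) i j x * p \<beta>) = 0"
    if "i \<le> n" "j \<le> n" for x i j
    using p that unfolding integrating_factor_iff_closedness_defect closedness_defect_linear[symmetric]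
    by blast
  ultimately show "\<exists>p. ?kernel p"
    by (intro exI[of _ p]) (auto simp: defect_matrix_def)
next
  assume "\<exists>p. ?kernel p"
  then obtain p where p: "?kernel p" ..
  define p' where "p' \<beta> = (if \<beta> \<in> mons n (d+2) then p \<beta> else 0)" for \<beta>
  have "closedness_defect n d w p' i j x = 0" if "i \<le> n" "j \<le> n" for i j x
  proof -
    have "closedness_defect n d w p' i j x = (\<Sum>\<beta>\<in>mons n (d+2). defect_matrix n d w (x, i, j) \<beta> * p \<beta>)"
      unfolding closedness_defect_linear[of _ _ _ p'] by (simp add: p'_def defect_matrix_def)
    with p that show ?thesis by simp
  qed
  with p have "integrating_factor n d w p'"
    unfolding integrating_factor_iff_closedness_defect is_hcoeffs_def p'_def by force
  then show ?lhs by blast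
qed

theorem lemma3p6:
  fixes n d :: nat
  assumes "n \<ge> 2"
  shows "zariski_closed_in ({..n} \<times> mons n (d+1))
           {w. twisted_form n d w \<and> (\<exists>p. integrating_factor n d w p)}"
proof -
  let ?I = "{..n} \<times> mons n (d+1)"
  let ?kernel = "{w. (\<forall>v. v \<notin> ?I \<longrightarrow> w v = 0) \<and> (\<exists>p. (\<exists>\<beta>\<in>mons n (d+2). p \<beta> \<noteq> 0) \<and>
     (\<forall>t\<in>UNIV \<times> {..n} \<times> {..n}. (\<Sum>\<beta>\<in>mons n (d+2). defect_matrix n d w t \<beta> * p \<beta>) = 0))}"
  have kernel_closed: "zariski_closed_in ?I ?kernel"
  proof (rule zariski_closed_in_nonzero_kernel[OF finite_mons])
    fix t :: "(nat \<Rightarrow> complex) \<times> nat \<times> nat" and \<beta>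
    assume "t \<in> UNIV \<times> {..n} \<times> {..n}"
    then obtain x i j where "t = (x, i, j)" "i \<le> n" "j \<le> n" by auto
    then show "polyfun_on ?I (\<lambda>w. defect_matrix n d w t \<beta>)"
      using polyfun_on_closedness_defect_in_form[of i n j d "indicator {\<beta>}" x]
      by (simp add: defect_matrix_def)
  qed
  have "w v = 0" if "twisted_form n d w" "v \<notin> ?I" for w v
    using that unfolding twisted_form_def by (cases v) auto
  then have "{w. twisted_form n d w \<and> (\<exists>p. integrating_factor n d w p)} =
      {w. twisted_form n d w} \<inter> ?kernel"
    unfolding ex_integrating_factor_iff_nonzero_kernel by blast
  then show ?thesis
    using zariski_closed_in_Int[OF zariski_closed_twisted_forms kernel_closed] by simp
qed

end
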